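(* Let $0\le\beta\le1$ and $f\in\mathcal{A}_{\beta}$ with $f(z)=z+\sum_{n=2}^{\infty}a_nz^n$, and let $\gamma_1=\frac12a_2$ and $\gamma_2=\frac12\left(a_3-\frac12a_2^2\right)$ be its first two logarithmic coefficients. Then $$-\frac{1}{\sqrt{5-6\beta+2\beta^2}}\le|\gamma_2|-|\gamma_1|\le\frac{1}{3-2\beta}.$$ Both inequalities are sharp.
   Context: $\mathbb{D}=\{z\in\mathbb{C}:|z|<1\}$. For $\beta\in[0,1]$, $\mathcal{A}_{\beta}$ is the set of analytic functions $f$ on $\mathbb{D}$ with $f(0)=0$, $f'(0)=1$ (so $f(z)=z+\sum_{n\ge2}a_nz^n$) such that $\operatorname{Re}\big(\beta f(z)/z+(1-\beta)f'(z)\big)>0$ for all $z\in\mathbb{D}$. The logarithmic coefficients $\gamma_n$ are defined by $\log\frac{f(z)}{z}=2\sum_{n\ge1}\gamma_nz^n$ near $0$ (with $\log1=0$), which gives $\gamma_1=a_2/2$, $\gamma_2=\frac12(a_3-\frac12a_2^2)$. Sharpness: the upper bound is attained by $f$ with $\beta f(z)/z+(1-\beta)f'(z)=\frac{1+z^2}{1-z^2}$, the lower bound by $f$ with $\beta f(z)/z+(1-\beta)f'(z)=\frac{1-z^2}{1-\frac{2(2-\beta)}{\sqrt{5-6\beta+2\beta^2}}z+z^2}$. *)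

theory Defs
  imports "HOL-Complex_Analysis.Complex_Analysis"
begin

text \<open>At z = 0 the quotient f(z)/z is
  understood by its removable extension (value f'(0) = 1), where the condition reads
  Re 1 = 1 > 0 automatically; hence it is imposed only for z \<noteq> 0.\<close>
definition A_beta :: "real \<Rightarrow> (complex \<Rightarrow> complex) \<Rightarrow> bool" where
  "A_beta \<beta> f \<longleftrightarrow> f holomorphic_on ball 0 1 \<and> f 0 = 0 \<and> deriv f 0 = 1 \<and>
     (\<forall>z\<in>ball 0 1. z \<noteq> 0 \<longrightarrow>
        Re (of_real \<beta> * (f z / z) + of_real (1 - \<beta>) * deriv f z) > 0)"

definition taylor_coeff :: "(complex \<Rightarrow> complex) \<Rightarrow> nat \<Rightarrow> complex" where
  "taylor_coeff f n = (deriv ^^ n) f 0 / of_nat (fact n)"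

definition log_gamma1 :: "(complex \<Rightarrow> complex) \<Rightarrow> complex" where
  "log_gamma1 f = taylor_coeff f 2 / 2"

definition log_gamma2 :: "(complex \<Rightarrow> complex) \<Rightarrow> complex" where
  "log_gamma2 f = (taylor_coeff f 3 - (taylor_coeff f 2)^2 / 2) / 2"

end

(*
  For f in A_beta the function p = beta f/z + (1 - beta) f' has positive real part and p(0) = 1,
  and its Taylor coefficients are c_n = (1 + n (1 - beta)) a_(n+1); conversely every such p arises
  from some f in A_beta. Consequently

    2 (2 - beta) gamma1 = c1,     2 (3 - 2 beta) gamma2 = (c2 - c1^2/2) + 2 (1 - beta)^2 gamma1^2.

  Writing p = (1 + z g)/(1 - z g) with |g| <= 1 gives c1 = 2 g(0) and c2 - c1^2/2 = 2 g'(0), so the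
  Schwarz-Pick inequality |g'(0)| <= 1 - |g(0)|^2 yields |c2 - c1^2/2| <= 2 - |c1|^2/2. Hence |gamma2|
  lies between ((5 - 6 beta + 2 beta^2) |gamma1|^2 - 1)/(3 - 2 beta) and 1/(3 - 2 beta) - |gamma1|^2,
  and minimising |gamma2| - |gamma1| over |gamma1| gives both bounds. Equality holds for
  p = (q_a + q_b)/2 with q_a(z) = (1 + a z)/(1 - a z), b = conj a, |a| = 1 and Re a = 0, resp.
  Re a = (2 - beta)/sqrt(5 - 6 beta + 2 beta^2).
*)
theory Submission
  imports Defs "HOL-Complex_Analysis.Riemann_Mapping"
begin

section \<open>The Schwarz--Pick inequality at the origin\<close>

lemma Moebius_function_0_has_field_derivative:
  assumes "1 - cnj w * z \<noteq> 0"
  shows "(Moebius_function 0 w has_field_derivative (1 - cnj w * w) / (1 - cnj w * z)^2) (at z)"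
proof -
  have "((\<lambda>z. (z - w) / (1 - cnj w * z)) has_field_derivative
          (1 - cnj w * w) / (1 - cnj w * z)^2) (at z)"
    using assms by (auto intro!: derivative_eq_intros simp: field_simps power2_eq_square)
  then show ?thesis by (simp add: Moebius_function_simple[abs_def])
qed

lemma schwarz_pick_deriv_0_strict:
  assumes holg: "g holomorphic_on ball 0 1" and g_ball: "g ` ball 0 1 \<subseteq> ball 0 1"
  shows "norm (deriv g 0) \<le> 1 - norm (g 0)^2"
proof -
  define a where "a = g 0"
  have a: "norm a < 1" using g_ball by (auto simp: a_def image_subset_iff)
  have a2: "cnj a * a = of_real (norm a ^ 2)"
    by (metis complex_norm_square mult.commute of_real_power)
  have pos: "1 - norm a ^ 2 > 0" using a by (simp add: power_less_one_iff)
  define k where "k = Moebius_function 0 a \<circ> g"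
  have "k holomorphic_on ball 0 1"
    unfolding k_def using g_ball
    by (intro holomorphic_on_compose_gen[OF holg Moebius_function_holomorphic[OF a]]) auto
  moreover have "k 0 = 0" by (simp add: k_def a_def Moebius_function_eq_zero)
  moreover have "norm (k z) < 1" if "norm z < 1" for z
    using g_ball that by (auto simp: k_def image_subset_iff intro!: Moebius_function_norm_lt_1[OF a])
  ultimately have "norm (deriv k 0) \<le> 1"
    using Schwarz_Lemma(2)[of k 0] by auto
  moreover have "(k has_field_derivative deriv g 0 / (1 - cnj a * a)) (at 0)"
  proof -
    have "1 - cnj a * a \<noteq> 0" using pos a2 by (metis less_irrefl of_real_1 of_real_diff of_real_eq_0_iff)
    then have "(Moebius_function 0 a has_field_derivative 1 / (1 - cnj a * a)) (at (g 0))"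
      using Moebius_function_0_has_field_derivative[of a a]
      by (simp add: a_def power2_eq_square)
    moreover have "(g has_field_derivative deriv g 0) (at 0)"
      by (rule holomorphic_derivI[OF holg]) auto
    ultimately show ?thesis
      unfolding k_def by (auto dest: DERIV_chain)
  qed
  then have dk: "deriv k 0 = deriv g 0 / of_real (1 - norm a ^ 2)"
    by (simp add: DERIV_imp_deriv a2)
  have "norm (deriv k 0) = norm (deriv g 0) / (1 - norm a ^ 2)"
    by (simp only: dk norm_divide norm_of_real abs_of_pos[OF pos])
  ultimately show ?thesis using pos by (simp add: a_def field_simps)
qed

lemma schwarz_pick_deriv_0:
  assumes holg: "g holomorphic_on ball 0 1" and g_le: "\<And>z. z \<in> ball 0 1 \<Longrightarrow> norm (g z) \<le> 1"
  shows "norm (deriv g 0) \<le> 1 - norm (g 0)^2"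
proof (cases "\<exists>z\<in>ball 0 1. norm (g z) = 1")
  case True
  then obtain z where z: "z \<in> ball 0 1" "norm (g z) = 1" by blast
  have "g constant_on ball 0 1"
  proof (rule Schwarz2[OF holg])
    show "0 < 1 - norm z" "ball z (1 - norm z) \<subseteq> ball 0 1"
      using z by (auto simp: ball_subset_ball_iff)
    show "norm (g y) \<le> norm (g z)" if "norm (z - y) < 1 - norm z" for y
      using g_le[of y] that z by (simp add: dist_norm norm_minus_commute) (smt (verit) norm_triangle_ineq2)
  qed
  then obtain c where c: "\<And>y. y \<in> ball 0 1 \<Longrightarrow> g y = c" by (auto simp: constant_on_def)
  have "deriv g 0 = deriv (\<lambda>_. c) 0"
    by (intro deriv_cong_ev eventually_mono[OF eventually_nhds_in_open[of "ball 0 1"]]) (auto simp: c)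
  then show ?thesis using c[of 0] c[OF z(1)] z(2) by simp
next
  case False
  then have "g ` ball 0 1 \<subseteq> ball 0 1" using g_le by fastforce
  then show ?thesis by (rule schwarz_pick_deriv_0_strict[OF holg])
qed

section \<open>Taylor coefficients of holomorphic functions on a disc\<close>

lemma taylor_coeff_eq_fps_nth:
  assumes "f has_fps_expansion F"
  shows "taylor_coeff f n = fps_nth F n"
  using fps_nth_fps_expansion[OF assms] by (simp add: taylor_coeff_def)

lemma has_fps_expansion_taylor_coeff:
  assumes "f holomorphic_on ball 0 r" "0 < r"
  shows "f has_fps_expansion Abs_fps (taylor_coeff f)"
proof -
  have "f has_fps_expansion fps_expansion f 0"
    using assms by (intro has_fps_expansion_fps_expansion[of "ball 0 r"]) auto
  then show ?thesis by (simp add: fps_expansion_def taylor_coeff_def[abs_def])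
qed

lemma has_fps_expansion_eventually_eq_imp_eq:
  fixes F G :: "complex fps"
  assumes "f has_fps_expansion F" "g has_fps_expansion G" "eventually (\<lambda>z. f z = g z) (nhds 0)"
  shows "F = G"
  using assms(1,2) has_fps_expansion_cong[OF assms(3) refl]
  by (blast intro: fps_expansion_unique_complex)

lemma fps_conv_radius_le_of_norm_le:
  fixes F G :: "'a :: {banach, real_normed_div_algebra} fps"
  assumes "\<And>n. norm (fps_nth G n) \<le> norm (fps_nth F n)"
  shows "fps_conv_radius F \<le> fps_conv_radius G"
  unfolding fps_conv_radius_def
proof (rule conv_radius_geI_ex')
  fix r :: real assume "0 < r" "ereal r < conv_radius (fps_nth F)"
  then have "summable (\<lambda>n. norm (fps_nth F n * of_real r ^ n))"
    by (intro abs_summable_in_conv_radius) simp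
  then show "summable (\<lambda>n. fps_nth G n * of_real r ^ n)"
    by (rule summable_comparison_test') (simp add: norm_mult mult_right_mono assms)
qed

lemma holomorphic_with_dominated_taylor_coeffs_exists:
  assumes holp: "p holomorphic_on ball 0 1" and dom: "\<And>n. norm (c n) \<le> norm (taylor_coeff p n)"
  obtains h where "h holomorphic_on ball 0 1" "\<And>n. taylor_coeff h n = c n"
proof -
  define P where "P = Abs_fps (taylor_coeff p)"
  have hP: "p has_fps_expansion P"
    unfolding P_def by (rule has_fps_expansion_taylor_coeff[OF holp]) simp
  have "1 \<le> fps_conv_radius P"
    using holomorphic_on_imp_fps_conv_radius_ge[OF hP, of 1] holp by (simp add: one_ereal_def)
  also have "fps_conv_radius P \<le> fps_conv_radius (Abs_fps c)"
    by (rule fps_conv_radius_le_of_norm_le) (simp add: P_def dom)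
  finally have radius: "1 \<le> fps_conv_radius (Abs_fps c)" .
  have in_radius: "ereal (norm z) < fps_conv_radius (Abs_fps c)" if "norm z < 1" for z
  proof -
    have "ereal (norm z) < 1" using that by simp
    then show ?thesis using radius by (rule less_le_trans)
  qed
  show ?thesis
  proof
    show "eval_fps (Abs_fps c) holomorphic_on ball 0 1"
      by (intro holomorphic_intros) (auto intro: in_radius)
    have "eval_fps (Abs_fps c) has_fps_expansion Abs_fps c"
      using in_radius[of 0] by (intro eval_fps_has_fps_expansion) (simp add: zero_ereal_def)
    from taylor_coeff_eq_fps_nth[OF this]
    show "taylor_coeff (eval_fps (Abs_fps c)) n = c n" for n
      by simp
  qed
qed

lemma holomorphic_eq_if_taylor_coeff_eq:
  assumes "f holomorphic_on ball 0 r" "g holomorphic_on ball 0 r"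
    and "\<And>n. taylor_coeff f n = taylor_coeff g n" and "z \<in> ball 0 r"
  shows "f z = g z"
proof -
  have r: "0 < r" using assms(4) by (auto intro: le_less_trans[OF norm_ge_zero])
  have "(\<lambda>z. f z - g z) has_fps_expansion Abs_fps (taylor_coeff f) - Abs_fps (taylor_coeff g)"
    using assms(1,2) r by (intro fps_expansion_intros has_fps_expansion_taylor_coeff)
  moreover have "taylor_coeff f = taylor_coeff g"
    using assms(3) by (rule ext)
  ultimately have "(\<lambda>z. f z - g z) has_fps_expansion 0"
    by simp
  moreover have "(\<lambda>z. f z - g z) holomorphic_on ball 0 r"
    using assms(1,2) by (intro holomorphic_intros)
  ultimately have "f z - g z = 0"
    using has_fps_expansion_0_analytic_continuation[of "\<lambda>z. f z - g z" "ball 0 r" z] assms(4) r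
    by auto
  then show ?thesis by simp
qed

section \<open>The Caratheodory class\<close>

definition caratheodory_fun :: "(complex \<Rightarrow> complex) \<Rightarrow> bool" where
  "caratheodory_fun p \<longleftrightarrow>
     p holomorphic_on ball 0 1 \<and> p 0 = 1 \<and> (\<forall>z\<in>ball 0 1. Re (p z) > 0)"

lemma caratheodory_fun_schwarz_form:
  assumes "caratheodory_fun p"
  obtains g where "g holomorphic_on ball 0 1" "\<And>z. z \<in> ball 0 1 \<Longrightarrow> norm (g z) \<le> 1"
    "\<And>z. z \<in> ball 0 1 \<Longrightarrow> p z * (1 - z * g z) = 1 + z * g z"
proof -
  have holp: "p holomorphic_on ball 0 1" and p0: "p 0 = 1"
    and re: "\<And>z. z \<in> ball 0 1 \<Longrightarrow> Re (p z) > 0"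
    using assms by (auto simp: caratheodory_fun_def)
  have nz: "p z + 1 \<noteq> 0" if "z \<in> ball 0 1" for z
    using re[OF that] by (auto simp: complex_eq_iff)
  define w where "w z = (p z - 1) / (p z + 1)" for z
  have holw: "w holomorphic_on ball 0 1"
    unfolding w_def using nz by (intro holomorphic_intros holp) auto
  have w0: "w 0 = 0" by (simp add: w_def p0)
  have w_lt: "norm (w z) < 1" if "norm z < 1" for z
  proof -
    have z: "z \<in> ball 0 1" using that by simp
    have "norm (p z - 1) ^ 2 < norm (p z + 1) ^ 2"
      using re[OF z] unfolding cmod_power2 by (simp add: power2_eq_square algebra_simps)
    then have "norm (p z - 1) < norm (p z + 1)"
      by (rule power_less_imp_less_base) simp
    then show ?thesis using nz[OF z] by (simp add: w_def norm_divide divide_less_eq)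
  qed
  obtain g where holg: "g holomorphic_on ball 0 1" and wg: "\<And>z. norm z < 1 \<Longrightarrow> w z = z * g z"
      and dw: "deriv w 0 = g 0"
    using Schwarz3[OF holw w0] by blast
  show ?thesis
  proof
    show "norm (g z) \<le> 1" if z: "z \<in> ball 0 1" for z
    proof (cases "z = 0")
      case True
      then show ?thesis using Schwarz_Lemma(2)[OF holw w0 w_lt, of 0] dw by auto
    next
      case False
      have "norm z * norm (g z) \<le> norm z"
        using Schwarz_Lemma(1)[OF holw w0 w_lt, of z] wg[of z] z by (auto simp: norm_mult)
      then show ?thesis using False by simp
    qed
    show "p z * (1 - z * g z) = 1 + z * g z" if z: "z \<in> ball 0 1" for z
      using wg[of z] z nz[OF z] by (auto simp: w_def divide_eq_eq algebra_simps)
  qed (fact holg)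
qed

lemma caratheodory_coeff_ineq:
  assumes "caratheodory_fun p"
  shows "norm (taylor_coeff p 2 - taylor_coeff p 1 ^ 2 / 2) \<le> 2 - norm (taylor_coeff p 1) ^ 2 / 2"
proof -
  obtain g where holg: "g holomorphic_on ball 0 1" and g_le: "\<And>z. z \<in> ball 0 1 \<Longrightarrow> norm (g z) \<le> 1"
    and pg: "\<And>z. z \<in> ball 0 1 \<Longrightarrow> p z * (1 - z * g z) = 1 + z * g z"
    using caratheodory_fun_schwarz_form[OF assms] by blast
  define P where "P = Abs_fps (taylor_coeff p)"
  define G where "G = Abs_fps (taylor_coeff g)"
  have hP: "p has_fps_expansion P" and hG: "g has_fps_expansion G"
    using assms holg by (auto simp: P_def G_def caratheodory_fun_def intro!: has_fps_expansion_taylor_coeff)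
  have "P * (1 - fps_X * G) = 1 + fps_X * G"
    by (rule has_fps_expansion_eventually_eq_imp_eq[where f = "\<lambda>z. p z * (1 - z * g z)"])
       (auto intro!: fps_expansion_intros hP hG eventually_mono[OF eventually_nhds_in_open[of "ball 0 1"]] pg)
  then have "fps_nth (P * (1 - fps_X * G)) n = fps_nth (1 + fps_X * G) n" for n
    by simp
  from this[of 0] this[of 1] this[of 2]
  have c1: "taylor_coeff p 1 = 2 * g 0" and c2: "taylor_coeff p 2 = 2 * deriv g 0 + 2 * g 0 ^ 2"
    using assms by (auto simp: P_def G_def fps_mult_nth numeral_2_eq_2 taylor_coeff_def
        caratheodory_fun_def power2_eq_square algebra_simps)
  have "norm (taylor_coeff p 2 - taylor_coeff p 1 ^ 2 / 2) = 2 * norm (deriv g 0)"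
    unfolding c1 c2 by (simp add: power2_eq_square norm_mult)
  also have "\<dots> \<le> 2 - 2 * norm (g 0) ^ 2"
    using schwarz_pick_deriv_0[OF holg g_le] by simp
  also have "\<dots> = 2 - norm (taylor_coeff p 1) ^ 2 / 2"
    unfolding c1 by (simp add: norm_mult power2_eq_square)
  finally show ?thesis .
qed

lemma Re_half_plane_map_pos:
  fixes u :: complex
  assumes "norm u < 1"
  shows "Re ((1 + u) / (1 - u)) > 0"
proof -
  have "Re ((1 + u) / (1 - u)) = (1 - norm u ^ 2) / norm (1 - u) ^ 2"
    unfolding Re_divide cmod_power2 by (simp add: power2_eq_square algebra_simps)
  moreover have "norm u ^ 2 < 1" using assms by (simp add: power_less_one_iff)
  moreover have "1 - u \<noteq> 0" using assms by auto
  ultimately show ?thesis by simp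
qed

lemma half_plane_map_has_fps_expansion:
  fixes a :: complex
  shows "(\<lambda>z. (1 + a * z) / (1 - a * z)) has_fps_expansion Abs_fps (\<lambda>n. if n = 0 then 1 else 2 * a ^ n)"
proof -
  define Q where "Q = Abs_fps (\<lambda>n. if n = 0 then 1 else 2 * a ^ n)"
  have "Q * (1 - fps_const a * fps_X) = 1 + fps_const a * fps_X"
  proof (rule fps_ext)
    fix n
    show "fps_nth (Q * (1 - fps_const a * fps_X)) n = fps_nth (1 + fps_const a * fps_X) n"
      by (cases n) (auto simp: Q_def algebra_simps fps_mult_fps_X_commute[symmetric])
  qed
  moreover have "(\<lambda>z. (1 + a * z) / (1 - a * z)) has_fps_expansion
      (1 + fps_const a * fps_X) / (1 - fps_const a * fps_X)"
    by (intro fps_expansion_intros) auto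
  moreover have "1 - fps_const a * fps_X \<noteq> 0"
  proof
    assume "1 - fps_const a * fps_X = 0"
    then have "fps_nth (1 - fps_const a * fps_X) 0 = 0" by simp
    then show False by simp
  qed
  ultimately show ?thesis
    unfolding Q_def by (metis fps_divide_times_eq)
qed

definition two_point_caratheodory :: "complex \<Rightarrow> complex \<Rightarrow> complex \<Rightarrow> complex" where
  "two_point_caratheodory a b z = ((1 + a * z) / (1 - a * z) + (1 + b * z) / (1 - b * z)) / 2"

lemma caratheodory_fun_two_point:
  assumes "norm a \<le> 1" "norm b \<le> 1"
  shows "caratheodory_fun (two_point_caratheodory a b)"
proof -
  have lt1: "norm (c * z) < 1" if "norm c \<le> 1" "z \<in> ball 0 1" for c z :: complex
  proof -
    have "norm c * norm z \<le> norm z"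
      using that(1) mult_right_mono[of "norm c" 1 "norm z"] by simp
    then show ?thesis using that(2) by (simp add: norm_mult)
  qed
  have "1 - c * z \<noteq> 0" if "norm c \<le> 1" "z \<in> ball 0 1" for c z :: complex
    using lt1[OF that] by auto
  then show ?thesis
    unfolding caratheodory_fun_def two_point_caratheodory_def
    using assms lt1 by (auto intro!: holomorphic_intros add_pos_pos Re_half_plane_map_pos)
qed

lemma taylor_coeff_two_point:
  "taylor_coeff (two_point_caratheodory a b) (Suc n) = a ^ Suc n + b ^ Suc n"
proof -
  have "two_point_caratheodory a b has_fps_expansion
      (Abs_fps (\<lambda>n. if n = 0 then 1 else 2 * a ^ n) + Abs_fps (\<lambda>n. if n = 0 then 1 else 2 * b ^ n)) / 2"
    unfolding two_point_caratheodory_def[abs_def]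
    by (intro fps_expansion_intros half_plane_map_has_fps_expansion) auto
  from taylor_coeff_eq_fps_nth[OF this, of "Suc n"]
  have "2 * taylor_coeff (two_point_caratheodory a b) (Suc n) = 2 * (a ^ Suc n + b ^ Suc n)"
    by (simp add: fps_numeral_fps_const algebra_simps)
  then show ?thesis
    by (metis mult_cancel_left zero_neq_numeral)
qed

lemma caratheodory_fun_with_real_coeffs_exists:
  fixes t :: real
  assumes "t^2 \<le> 1"
  obtains p where "caratheodory_fun p"
    "taylor_coeff p 1 = of_real (2 * t)" "taylor_coeff p 2 = of_real (4 * t^2 - 2)"
proof -
  define a where "a = Complex t (sqrt (1 - t^2))"
  have "norm a = 1" and "norm (cnj a) = 1"
    using assms by (simp_all add: a_def cmod_def)
  moreover have "a + cnj a = of_real (2 * t)" "a^2 + cnj a ^ 2 = of_real (4 * t^2 - 2)"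
    using assms by (simp_all add: a_def complex_eq_iff power2_eq_square algebra_simps)
  ultimately show ?thesis
    using that[OF caratheodory_fun_two_point[of a "cnj a"]]
      taylor_coeff_two_point[of a "cnj a" 0] taylor_coeff_two_point[of a "cnj a" 1]
    by (simp add: numeral_2_eq_2)
qed

section \<open>The class A_beta and its logarithmic coefficients\<close>

lemma taylor_coeffs_of_quotient_form:
  assumes holh: "h holomorphic_on ball 0 1" and holf: "f holomorphic_on ball 0 1"
    and fh: "\<And>z. z \<in> ball 0 1 \<Longrightarrow> f z = z * h z"
  shows "taylor_coeff f (Suc n) = taylor_coeff h n"
    and "taylor_coeff (\<lambda>z. of_real \<beta> * h z + of_real (1 - \<beta>) * deriv f z) n
           = of_real (1 + real n * (1 - \<beta>)) * taylor_coeff h n"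
proof -
  define H where "H = Abs_fps (taylor_coeff h)"
  have hH: "h has_fps_expansion H"
    unfolding H_def by (rule has_fps_expansion_taylor_coeff[OF holh]) simp
  have "f has_fps_expansion Abs_fps (taylor_coeff f)"
    by (rule has_fps_expansion_taylor_coeff[OF holf]) simp
  moreover have "(\<lambda>z. z * h z) has_fps_expansion fps_X * H"
    by (intro fps_expansion_intros hH)
  ultimately have FH: "Abs_fps (taylor_coeff f) = fps_X * H"
    by (rule has_fps_expansion_eventually_eq_imp_eq)
       (auto intro: eventually_mono[OF eventually_nhds_in_open[of "ball 0 1"]] fh)
  show "taylor_coeff f (Suc n) = taylor_coeff h n" for n
    using arg_cong[OF FH, of "\<lambda>F. fps_nth F (Suc n)"] by (simp add: H_def)
  have "(\<lambda>z. of_real \<beta> * h z + of_real (1 - \<beta>) * deriv f z) has_fps_expansion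
      fps_const (of_real \<beta>) * H + fps_const (of_real (1 - \<beta>)) * fps_deriv (fps_X * H)"
    using has_fps_expansion_taylor_coeff[OF holf] FH by (intro fps_expansion_intros hH) auto
  from taylor_coeff_eq_fps_nth[OF this, of n]
  show "taylor_coeff (\<lambda>z. of_real \<beta> * h z + of_real (1 - \<beta>) * deriv f z) n
      = of_real (1 + real n * (1 - \<beta>)) * taylor_coeff h n"
    by (simp add: H_def algebra_simps)
qed

lemma A_beta_imp_caratheodory:
  assumes "A_beta \<beta> f"
  obtains p where "caratheodory_fun p"
    "\<And>n. taylor_coeff p n = of_real (1 + real n * (1 - \<beta>)) * taylor_coeff f (Suc n)"
proof -
  have holf: "f holomorphic_on ball 0 1" and f0: "f 0 = 0" and df0: "deriv f 0 = 1"
    and re: "\<And>z. z \<in> ball 0 1 \<Longrightarrow> z \<noteq> 0 \<Longrightarrow>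
        Re (of_real \<beta> * (f z / z) + of_real (1 - \<beta>) * deriv f z) > 0"
    using assms by (auto simp: A_beta_def)
  obtain h where holh: "h holomorphic_on ball 0 1" and fh: "\<And>z. norm z < 1 \<Longrightarrow> f z = z * h z"
      and h0: "deriv f 0 = h 0"
    using Schwarz3[OF holf f0] by blast
  define p where "p z = of_real \<beta> * h z + of_real (1 - \<beta>) * deriv f z" for z
  have "caratheodory_fun p"
    unfolding caratheodory_fun_def
  proof (intro conjI ballI)
    show "p holomorphic_on ball 0 1"
      unfolding p_def by (intro holomorphic_intros holh holomorphic_deriv[OF holf]) auto
    show p0: "p 0 = 1" using h0 df0 by (simp add: p_def algebra_simps)
    show "Re (p z) > 0" if z: "z \<in> ball 0 1" for z
    proof (cases "z = 0")
      case False
      then have "h z = f z / z" using fh[of z] z by auto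
      then show ?thesis using re[OF z False] by (simp add: p_def)
    qed (simp add: p0)
  qed
  moreover have "taylor_coeff p n = of_real (1 + real n * (1 - \<beta>)) * taylor_coeff f (Suc n)" for n
  proof -
    have "f z = z * h z" if "z \<in> ball 0 1" for z
      using fh that by simp
    note coeffs = taylor_coeffs_of_quotient_form[OF holh holf this]
    have "taylor_coeff p n = of_real (1 + real n * (1 - \<beta>)) * taylor_coeff h n"
      unfolding p_def[abs_def] by (rule coeffs(2))
    then show ?thesis
      by (simp only: coeffs(1))
  qed
  ultimately show ?thesis
    using that by blast
qed

lemma caratheodory_imp_A_beta:
  assumes "\<beta> \<le> 1" and "caratheodory_fun p"
  obtains f where "A_beta \<beta> f"
    "\<And>n. taylor_coeff p n = of_real (1 + real n * (1 - \<beta>)) * taylor_coeff f (Suc n)"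
proof -
  have holp: "p holomorphic_on ball 0 1" and p0: "p 0 = 1"
    and re: "\<And>z. z \<in> ball 0 1 \<Longrightarrow> Re (p z) > 0"
    using assms(2) by (auto simp: caratheodory_fun_def)
  define d :: "nat \<Rightarrow> complex" where "d n = of_real (1 + real n * (1 - \<beta>))" for n
  have d_ge: "1 \<le> norm (d n)" for n
  proof -
    have "0 \<le> real n * (1 - \<beta>)" using assms(1) by simp
    then show ?thesis unfolding d_def norm_of_real by simp
  qed
  then have d_nz: "d n \<noteq> 0" for n
    by (metis norm_zero not_one_le_zero)
  have dom: "norm (taylor_coeff p n / d n) \<le> norm (taylor_coeff p n)" for n
    using d_ge[of n] by (simp add: norm_divide divide_le_eq mult_le_cancel_left1)
  obtain h where holh: "h holomorphic_on ball 0 1"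
    and h_coeff: "\<And>n. taylor_coeff h n = taylor_coeff p n / d n"
    using holomorphic_with_dominated_taylor_coeffs_exists[OF holp dom] by blast
  define f where "f z = z * h z" for z
  have holf: "f holomorphic_on ball 0 1"
    unfolding f_def by (intro holomorphic_intros holh)
  have "f z = z * h z" for z
    by (simp add: f_def)
  note coeffs = taylor_coeffs_of_quotient_form[OF holh holf this]
  define k where "k z = of_real \<beta> * h z + of_real (1 - \<beta>) * deriv f z" for z
  have holk: "k holomorphic_on ball 0 1"
    unfolding k_def by (intro holomorphic_intros holh holomorphic_deriv[OF holf]) auto
  have "taylor_coeff k n = d n * taylor_coeff h n" for n
    unfolding k_def[abs_def] d_def by (rule coeffs(2))
  then have k_coeff: "taylor_coeff k n = taylor_coeff p n" for n
    using d_nz[of n] by (simp add: h_coeff)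
  have "deriv f 0 = taylor_coeff f (Suc 0)"
    by (simp add: taylor_coeff_def)
  also have "\<dots> = 1"
    using coeffs(1)[of 0] h_coeff[of 0] p0 by (simp add: d_def taylor_coeff_def)
  finally have "deriv f 0 = 1" .
  moreover have "k z = p z" if "z \<in> ball 0 1" for z
    by (rule holomorphic_eq_if_taylor_coeff_eq[OF holk holp k_coeff that])
  ultimately have "A_beta \<beta> f"
    using holf re by (auto simp: A_beta_def f_def k_def)
  moreover have "taylor_coeff p n = d n * taylor_coeff f (Suc n)" for n
    using coeffs(1)[of n] d_nz[of n] by (simp add: h_coeff)
  ultimately show ?thesis using that by (simp add: d_def)
qed

lemma log_gammas_eq_of_coeffs:
  assumes "\<And>n. taylor_coeff p n = of_real (1 + real n * (1 - \<beta>)) * taylor_coeff f (Suc n)"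
  shows "taylor_coeff p 1 = of_real (2 * (2 - \<beta>)) * log_gamma1 f"
    and "of_real (2 * (3 - 2 * \<beta>)) * log_gamma2 f =
           (taylor_coeff p 2 - taylor_coeff p 1 ^ 2 / 2) + of_real (2 * (1 - \<beta>)^2) * log_gamma1 f ^ 2"
proof -
  have c1: "taylor_coeff p 1 = of_real (2 - \<beta>) * taylor_coeff f 2"
    using assms[of 1] by (simp add: numeral_2_eq_2 algebra_simps)
  have c2: "taylor_coeff p 2 = of_real (3 - 2 * \<beta>) * taylor_coeff f 3"
    using assms[of 2] by (simp add: numeral_2_eq_2 numeral_3_eq_3 algebra_simps)
  show "taylor_coeff p 1 = of_real (2 * (2 - \<beta>)) * log_gamma1 f"
    unfolding c1 log_gamma1_def by simp
  show "of_real (2 * (3 - 2 * \<beta>)) * log_gamma2 f =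
           (taylor_coeff p 2 - taylor_coeff p 1 ^ 2 / 2) + of_real (2 * (1 - \<beta>)^2) * log_gamma1 f ^ 2"
    unfolding c1 c2 log_gamma1_def log_gamma2_def by (simp add: power2_eq_square field_simps)
qed

lemma A_beta_norm_log_gamma2_bounds:
  assumes "\<beta> \<le> 1" and "A_beta \<beta> f"
  shows "cmod (log_gamma2 f) \<le> 1 / (3 - 2 * \<beta>) - cmod (log_gamma1 f)^2"
    and "(5 - 6 * \<beta> + 2 * \<beta>^2) * cmod (log_gamma1 f)^2 - 1 \<le> (3 - 2 * \<beta>) * cmod (log_gamma2 f)"
proof -
  obtain p where carp: "caratheodory_fun p"
    and coeffs: "\<And>n. taylor_coeff p n = of_real (1 + real n * (1 - \<beta>)) * taylor_coeff f (Suc n)"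
    using A_beta_imp_caratheodory[OF assms(2)] by blast
  define D where "D = taylor_coeff p 2 - taylor_coeff p 1 ^ 2 / 2"
  define x where "x = cmod (log_gamma1 f)"
  define y where "y = cmod (log_gamma2 f)"
  have T_pos: "3 - 2 * \<beta> > 0" using assms(1) by simp
  have "cmod (taylor_coeff p 1) ^ 2 / 2 = 2 * (2 - \<beta>)^2 * x^2"
    unfolding log_gammas_eq_of_coeffs(1)[OF coeffs] norm_mult norm_of_real x_def
    by (simp add: power_mult_distrib power2_eq_square field_simps)
  then have D_le: "cmod D \<le> 2 - 2 * (2 - \<beta>)^2 * x^2"
    using caratheodory_coeff_ineq[OF carp] unfolding D_def by linarith
  have key: "of_real (2 * (3 - 2 * \<beta>)) * log_gamma2 f = D + of_real (2 * (1 - \<beta>)^2) * log_gamma1 f ^ 2"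
    unfolding D_def by (rule log_gammas_eq_of_coeffs(2)[OF coeffs])
  have norm_lhs: "cmod (of_real (2 * (3 - 2 * \<beta>)) * log_gamma2 f) = 2 * (3 - 2 * \<beta>) * y"
    using T_pos unfolding norm_mult norm_of_real y_def by simp
  have norm_rhs: "cmod (of_real (2 * (1 - \<beta>)^2) * log_gamma1 f ^ 2) = 2 * (1 - \<beta>)^2 * x^2"
    unfolding norm_mult norm_of_real norm_power x_def by simp
  have "2 * (3 - 2 * \<beta>) * y \<le> cmod D + 2 * (1 - \<beta>)^2 * x^2"
    using norm_triangle_ineq[of D "of_real (2 * (1 - \<beta>)^2) * log_gamma1 f ^ 2"]
    unfolding key[symmetric] norm_lhs norm_rhs .
  moreover have "2 * (2 - \<beta>)^2 * x^2 - 2 * (1 - \<beta>)^2 * x^2 = 2 * (3 - 2 * \<beta>) * x^2"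
    by (simp add: power2_eq_square algebra_simps)
  ultimately have "(3 - 2 * \<beta>) * y \<le> 1 - (3 - 2 * \<beta>) * x^2"
    using D_le by linarith
  then show "y \<le> 1 / (3 - 2 * \<beta>) - x^2"
    using T_pos by (simp add: field_simps)
  have "cmod (of_real (2 * (1 - \<beta>)^2) * log_gamma1 f ^ 2) - cmod D
      \<le> cmod (D + of_real (2 * (1 - \<beta>)^2) * log_gamma1 f ^ 2)"
    using norm_diff_ineq[of "of_real (2 * (1 - \<beta>)^2) * log_gamma1 f ^ 2" D] by (simp add: add.commute)
  then have "2 * (1 - \<beta>)^2 * x^2 - cmod D \<le> 2 * (3 - 2 * \<beta>) * y"
    unfolding key[symmetric] norm_lhs norm_rhs .
  moreover have "2 * (2 - \<beta>)^2 * x^2 + 2 * (1 - \<beta>)^2 * x^2 = 2 * (5 - 6 * \<beta> + 2 * \<beta>^2) * x^2"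
    by (simp add: power2_eq_square algebra_simps)
  ultimately show "(5 - 6 * \<beta> + 2 * \<beta>^2) * x^2 - 1 \<le> (3 - 2 * \<beta>) * y"
    using D_le by linarith
qed

lemma A_beta_with_log_gammas_exists:
  fixes \<beta> t :: real
  assumes "\<beta> \<le> 1" and "t^2 \<le> 1"
  obtains f where "A_beta \<beta> f" "log_gamma1 f = of_real (t / (2 - \<beta>))"
    "log_gamma2 f = of_real ((t^2 - 1 + (1 - \<beta>)^2 * t^2 / (2 - \<beta>)^2) / (3 - 2 * \<beta>))"
proof -
  obtain p where carp: "caratheodory_fun p"
    and c1: "taylor_coeff p 1 = of_real (2 * t)" and c2: "taylor_coeff p 2 = of_real (4 * t^2 - 2)"
    using caratheodory_fun_with_real_coeffs_exists[OF assms(2)] by blast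
  obtain f where A: "A_beta \<beta> f"
    and coeffs: "\<And>n. taylor_coeff p n = of_real (1 + real n * (1 - \<beta>)) * taylor_coeff f (Suc n)"
    using caratheodory_imp_A_beta[OF assms(1) carp] by blast
  define B where "B = 2 - \<beta>"
  define T where "T = 3 - 2 * \<beta>"
  have B_pos: "B > 0" and T_pos: "T > 0"
    using assms(1) by (simp_all add: B_def T_def)
  have "2 * t = 2 * B * (t / B)"
    using B_pos by simp
  then have "of_real (2 * B) * log_gamma1 f = of_real (2 * B) * of_real (t / B)"
    using log_gammas_eq_of_coeffs(1)[OF coeffs] unfolding c1 B_def by (metis of_real_mult)
  then have g1: "log_gamma1 f = of_real (t / B)"
    using B_pos by (simp only: mult_cancel_left of_real_eq_0_iff) auto
  have "of_real (2 * T) * log_gamma2 f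
      = of_real ((4 * t^2 - 2) - (2 * t)^2 / 2 + 2 * (1 - \<beta>)^2 * (t / B)^2)"
    using log_gammas_eq_of_coeffs(2)[OF coeffs] unfolding c1 c2 g1 T_def by simp
  also have "(4 * t^2 - 2) - (2 * t)^2 / 2 + 2 * (1 - \<beta>)^2 * (t / B)^2
      = 2 * T * ((t^2 - 1 + (1 - \<beta>)^2 * t^2 / B^2) / T)"
    using B_pos T_pos by (simp add: power_divide field_simps)
  finally have "of_real (2 * T) * log_gamma2 f
      = of_real (2 * T) * of_real ((t^2 - 1 + (1 - \<beta>)^2 * t^2 / B^2) / T)"
    by (metis of_real_mult)
  then have "log_gamma2 f = of_real ((t^2 - 1 + (1 - \<beta>)^2 * t^2 / B^2) / T)"
    using T_pos by (simp only: mult_cancel_left of_real_eq_0_iff) auto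
  with A g1 show ?thesis
    using that by (simp add: B_def T_def)
qed

lemma A_beta_attains_upper_bound:
  assumes "\<beta> \<le> 1"
  shows "\<exists>f. A_beta \<beta> f \<and> cmod (log_gamma2 f) - cmod (log_gamma1 f) = 1 / (3 - 2 * \<beta>)"
proof -
  obtain f where A: "A_beta \<beta> f" and g1: "log_gamma1 f = 0"
    and g2: "log_gamma2 f = of_real (- 1 / (3 - 2 * \<beta>))"
    using A_beta_with_log_gammas_exists[OF assms, of 0] by auto
  have "cmod (log_gamma2 f) = 1 / (3 - 2 * \<beta>)"
    unfolding g2 norm_of_real using assms by simp
  then show ?thesis
    using A g1 by auto
qed

lemma A_beta_attains_lower_bound:
  assumes "\<beta> \<le> 1"
  shows "\<exists>f. A_beta \<beta> f \<and>
           cmod (log_gamma2 f) - cmod (log_gamma1 f) = - 1 / sqrt (5 - 6 * \<beta> + 2 * \<beta>^2)"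
proof -
  define s where "s = 5 - 6 * \<beta> + 2 * \<beta>^2"
  have s_eq: "s = (2 - \<beta>)^2 + (1 - \<beta>)^2"
    by (simp add: s_def power2_eq_square algebra_simps)
  have s_pos: "s > 0" and B_pos: "2 - \<beta> > 0"
    using assms by (auto simp: s_eq add_pos_nonneg)
  define t where "t = (2 - \<beta>) / sqrt s"
  have t2: "t^2 = (2 - \<beta>)^2 / s"
    using s_pos by (simp add: t_def power_divide)
  then have "t^2 \<le> 1"
    using s_pos by (simp add: s_eq)
  then obtain f where A: "A_beta \<beta> f" and g1: "log_gamma1 f = of_real (t / (2 - \<beta>))"
    and g2: "log_gamma2 f = of_real ((t^2 - 1 + (1 - \<beta>)^2 * t^2 / (2 - \<beta>)^2) / (3 - 2 * \<beta>))"
    using A_beta_with_log_gammas_exists[OF assms] by blast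
  have "t^2 - 1 + (1 - \<beta>)^2 * t^2 / (2 - \<beta>)^2 = ((2 - \<beta>)^2 + (1 - \<beta>)^2) / s - 1"
    using s_pos B_pos by (simp add: t2 field_simps)
  also have "\<dots> = 0"
    using s_pos by (simp add: s_eq[symmetric])
  finally have "log_gamma2 f = 0"
    by (simp add: g2)
  moreover have "log_gamma1 f = of_real (1 / sqrt s)"
    using B_pos by (simp add: g1 t_def)
  ultimately show ?thesis
    using A s_pos by (intro exI[of _ f]) (simp add: s_def norm_divide)
qed

lemma neg_inverse_le_diff:
  fixes r T x y :: real
  assumes "0 < r" "T \<le> 2 * r" "0 \<le> y" "(r * x)^2 - 1 \<le> T * y"
  shows "- 1 / r \<le> y - x"
proof -
  have "T * y \<le> 2 * r * y" using assms(2,3) by (rule mult_right_mono)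
  moreover have "0 \<le> (r * x - 1)^2" by simp
  ultimately have "r * x - 1 \<le> r * y"
    using assms(4) by (simp add: power2_eq_square algebra_simps)
  then show ?thesis using assms(1) by (simp add: field_simps)
qed

lemma sqrt_beta_quadratic_pos: "0 < sqrt (5 - 6 * \<beta> + 2 * (\<beta>::real)^2)"
proof -
  have "0 < (2 - \<beta>)^2 + (1 - \<beta>)^2"
    by (cases "\<beta> = 2") (simp_all add: add_pos_nonneg)
  then show ?thesis
    by (simp add: power2_eq_square algebra_simps)
qed

lemma three_minus_twice_le_twice_sqrt: "3 - 2 * \<beta> \<le> 2 * sqrt (5 - 6 * \<beta> + 2 * (\<beta>::real)^2)"
proof -
  have "((3 - 2 * \<beta>) / 2)^2 \<le> 5 - 6 * \<beta> + 2 * \<beta>^2"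
    using zero_le_power2[of "3 - 2 * \<beta>"] by (simp add: power2_eq_square field_simps)
  then show ?thesis
    using real_le_rsqrt by fastforce
qed

theorem theorem4p1:
  fixes \<beta> :: real
  assumes "0 \<le> \<beta>" and "\<beta> \<le> 1"
  shows "(\<forall>f. A_beta \<beta> f \<longrightarrow>
            - 1 / sqrt (5 - 6 * \<beta> + 2 * \<beta>^2) \<le> cmod (log_gamma2 f) - cmod (log_gamma1 f) \<and>
            cmod (log_gamma2 f) - cmod (log_gamma1 f) \<le> 1 / (3 - 2 * \<beta>))
       \<and> (\<exists>f. A_beta \<beta> f \<and> cmod (log_gamma2 f) - cmod (log_gamma1 f) = 1 / (3 - 2 * \<beta>))
       \<and> (\<exists>f. A_beta \<beta> f \<and>
            cmod (log_gamma2 f) - cmod (log_gamma1 f) = - 1 / sqrt (5 - 6 * \<beta> + 2 * \<beta>^2))"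
proof (intro conjI allI impI)
  fix f assume f: "A_beta \<beta> f"
  note bounds = A_beta_norm_log_gamma2_bounds[OF assms(2) f]
  show "cmod (log_gamma2 f) - cmod (log_gamma1 f) \<le> 1 / (3 - 2 * \<beta>)"
    using bounds(1) norm_ge_zero[of "log_gamma1 f"] zero_le_power2[of "cmod (log_gamma1 f)"]
    by linarith
  show "- 1 / sqrt (5 - 6 * \<beta> + 2 * \<beta>^2) \<le> cmod (log_gamma2 f) - cmod (log_gamma1 f)"
  proof (rule neg_inverse_le_diff[OF sqrt_beta_quadratic_pos three_minus_twice_le_twice_sqrt norm_ge_zero])
    show "(sqrt (5 - 6 * \<beta> + 2 * \<beta>^2) * cmod (log_gamma1 f))^2 - 1
        \<le> (3 - 2 * \<beta>) * cmod (log_gamma2 f)"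
      using bounds(2) sqrt_beta_quadratic_pos[of \<beta>] by (simp add: power_mult_distrib)
  qed
qed (use A_beta_attains_upper_bound A_beta_attains_lower_bound assms in auto)

end
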